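(* Let $G=(V,E)$ with $V=\{v_1,\dots,v_n\}$ be an undirected graph in which every vertex has degree 2 or 3 and which has no cycles of length 3 or 4, and let $\alpha(G)$ be the maximum size of an independent set of $G$. Fix a total order $\pi$ on $V$. Call $v_i$ of type 1 if $\deg(v_i)=3$ and all its neighbors are before it or all are after it in $\pi$; type 2 if $\deg(v_i)=3$ otherwise; type 3 if $\deg(v_i)=2$ and both neighbors are before it or both are after it; type 4 if $\deg(v_i)=2$ otherwise. Construct the DAG $D=(S\uplus I,A)$: create a set $T\subseteq S$ of 4 vertices; for each $i$ create an internal vertex $u_i\in I$ and sets $I_i,O_i\subseteq S$ of 4 vertices each; add all arcs from $I_i$ to $\{u_i\}\cup T$ and all arcs from $u_i$ to $O_i\cup T$; add exactly $14,16,11,12$ arcs (arbitrary ones) from $I_i$ to $O_i$ when $v_i$ has type $1,2,3,4$ respectively; and for each edge $\{v_i,v_j\}\in E$ with $v_i$ before $v_j$ in $\pi$ add the arc $(u_i,u_j)$. Let $m'=|A|$. Then for every integer $k\ge0$, $G$ has an independent set of size at least $k$ if and only if there is an elimination sequence $\sigma$ of vertices of $I$ such that $D_\sigma$ has at most $m'-k$ arcs. Equivalently, the minimum number of arcs of $D_\sigma$ over all elimination sequences $\sigma$ equals $m'-\alpha(G)$.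
   Context: Eliminating a vertex $v$ of a DAG produces the DAG obtained by deleting $v$ and adding every arc $(x,y)$ with $x$ an in-neighbor and $y$ an out-neighbor of $v$ that is not already present. An elimination sequence is a sequence of distinct internal vertices (of any length), and $D_\sigma$ is the result of eliminating them in order. An independent set is a vertex set containing no edge of $G$. *)

theory Defs
  imports Main
begin

definition eliminate :: "('n \<times> 'n) set \<Rightarrow> 'n \<Rightarrow> ('n \<times> 'n) set" where
  "eliminate A v = {(x, y). (x, y) \<in> A \<and> x \<noteq> v \<and> y \<noteq> v}
                   \<union> {(x, y). (x, v) \<in> A \<and> (v, y) \<in> A}"

definition eliminate_seq :: "('n \<times> 'n) set \<Rightarrow> 'n list \<Rightarrow> ('n \<times> 'n) set" where
  "eliminate_seq A \<sigma> = fold (\<lambda>v B. eliminate B v) \<sigma> A"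

definition elimination_sequence :: "'n set \<Rightarrow> 'n list \<Rightarrow> bool" where
  "elimination_sequence I \<sigma> \<longleftrightarrow> distinct \<sigma> \<and> set \<sigma> \<subseteq> I"

definition ugraph :: "'v set \<Rightarrow> ('v \<Rightarrow> 'v \<Rightarrow> bool) \<Rightarrow> bool" where
  "ugraph V E \<longleftrightarrow> finite V \<and> (\<forall>x y. E x y \<longrightarrow> x \<in> V \<and> y \<in> V \<and> x \<noteq> y \<and> E y x)"

definition nbrs :: "'v set \<Rightarrow> ('v \<Rightarrow> 'v \<Rightarrow> bool) \<Rightarrow> 'v \<Rightarrow> 'v set" where
  "nbrs V E v = {w \<in> V. E v w}"

definition deg :: "'v set \<Rightarrow> ('v \<Rightarrow> 'v \<Rightarrow> bool) \<Rightarrow> 'v \<Rightarrow> nat" where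
  "deg V E v = card (nbrs V E v)"

definition no_C3_C4 :: "'v set \<Rightarrow> ('v \<Rightarrow> 'v \<Rightarrow> bool) \<Rightarrow> bool" where
  "no_C3_C4 V E \<longleftrightarrow>
     (\<nexists>a b c. a \<in> V \<and> b \<in> V \<and> c \<in> V \<and> E a b \<and> E b c \<and> E c a) \<and>
     (\<nexists>a b c d. a \<in> V \<and> b \<in> V \<and> c \<in> V \<and> d \<in> V \<and> distinct [a, b, c, d] \<and>
                E a b \<and> E b c \<and> E c d \<and> E d a)"

definition independent_set :: "'v set \<Rightarrow> ('v \<Rightarrow> 'v \<Rightarrow> bool) \<Rightarrow> 'v set \<Rightarrow> bool" where
  "independent_set V E S \<longleftrightarrow> S \<subseteq> V \<and> (\<forall>x\<in>S. \<forall>y\<in>S. \<not> E x y)"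

definition independence_number :: "'v set \<Rightarrow> ('v \<Rightarrow> 'v \<Rightarrow> bool) \<Rightarrow> nat" where
  "independence_number V E = Max {card S | S. independent_set V E S}"

text \<open>The total order \<pi> on V is given by a list vs enumerating V without repetitions;
x is before y iff x occurs earlier in vs.\<close>

definition before :: "'v list \<Rightarrow> 'v \<Rightarrow> 'v \<Rightarrow> bool" where
  "before vs x y \<longleftrightarrow> (\<exists>i j. i < j \<and> j < length vs \<and> vs ! i = x \<and> vs ! j = y)"

definition one_sided :: "'v list \<Rightarrow> ('v \<Rightarrow> 'v \<Rightarrow> bool) \<Rightarrow> 'v \<Rightarrow> bool" where
  "one_sided vs E v \<longleftrightarrow>
     (\<forall>w \<in> nbrs (set vs) E v. before vs w v) \<or> (\<forall>w \<in> nbrs (set vs) E v. before vs v w)"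

definition vtype :: "'v list \<Rightarrow> ('v \<Rightarrow> 'v \<Rightarrow> bool) \<Rightarrow> 'v \<Rightarrow> nat" where
  "vtype vs E v =
     (if deg (set vs) E v = 3 then (if one_sided vs E v then 1 else 2)
      else (if one_sided vs E v then 3 else 4))"

definition gadget_arcs :: "'v list \<Rightarrow> ('v \<Rightarrow> 'v \<Rightarrow> bool) \<Rightarrow> 'v \<Rightarrow> nat" where
  "gadget_arcs vs E v =
     (case vtype vs E v of Suc 0 \<Rightarrow> 14 | Suc (Suc 0) \<Rightarrow> 16 | Suc (Suc (Suc 0)) \<Rightarrow> 11 | _ \<Rightarrow> 12)"

datatype 'v dnode = Tn nat | Uv 'v | Inn 'v nat | Outn 'v nat

text \<open>T = {Tn 0..Tn 3}; u_i = Uv v; I_i = {Inn v 0..Inn v 3}; O_i = {Outn v 0..Outn v 3}.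
X v \<subseteq> {0..3} \<times> {0..3} selects which arcs (Inn v a, Outn v b) are added.\<close>

definition internal :: "'v list \<Rightarrow> 'v dnode set" where
  "internal vs = Uv ` set vs"

definition dag_arcs ::
  "'v list \<Rightarrow> ('v \<Rightarrow> 'v \<Rightarrow> bool) \<Rightarrow> ('v \<Rightarrow> (nat \<times> nat) set) \<Rightarrow> ('v dnode \<times> 'v dnode) set" where
  "dag_arcs vs E X =
     {(Inn v j, Uv v) | v j. v \<in> set vs \<and> j < 4}
   \<union> {(Inn v j, Tn t) | v j t. v \<in> set vs \<and> j < 4 \<and> t < 4}
   \<union> {(Uv v, Outn v j) | v j. v \<in> set vs \<and> j < 4}
   \<union> {(Uv v, Tn t) | v t. v \<in> set vs \<and> t < 4}
   \<union> {(Inn v a, Outn v b) | v a b. v \<in> set vs \<and> (a, b) \<in> X v}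
   \<union> {(Uv v, Uv w) | v w. v \<in> set vs \<and> w \<in> set vs \<and> E v w \<and> before vs v w}"

end

theory Submission
  imports Defs
begin

text \<open>Charge each destroyed arc to an eliminated endpoint (an arc u_v u_w between two
eliminated vertices to its head u_w), and charge to each eliminated v a set of created arcs: the
missing gadget arcs from I_v to O_v, arcs from I_v to O_w or to u_w, arcs from u_w to O_v and, when
no neighbour of v is eliminated, the arcs u_a u_b across v. Since G has no triangle these arcs are
new, and since G has no 4-cycle none of them is charged twice. The gadget sizes 14, 16, 11, 12 are
exactly 5 + 3 deg v + p q, where p and q count the neighbours of v before and after it. Hence an
eliminated vertex without eliminated neighbours loses exactly one arc more than it gains, while
every other eliminated vertex gains at least as much as it loses once 8 units are moved along each
edge inside U from its tail to its head. So eliminating U removes at most as many arcs as U has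
isolated vertices, and these form an independent set. Conversely, eliminating an independent set S
creates no arcs besides the charged ones, so at least |S| arcs disappear.\<close>

lemma Min_eq_diff_Max:
  fixes f :: "'a \<Rightarrow> nat" and g :: "'b \<Rightarrow> nat"
  assumes fin: "finite (f ` A)" "finite (g ` B)" and "B \<noteq> {}"
    and le: "\<And>b. b \<in> B \<Longrightarrow> \<exists>a\<in>A. f a + g b \<le> N"
    and ge: "\<And>a. a \<in> A \<Longrightarrow> \<exists>b\<in>B. N \<le> f a + g b"
  shows "Min (f ` A) = N - Max (g ` B)"
proof (rule antisym)
  obtain b where b: "b \<in> B" "g b = Max (g ` B)"
    using Max_in[OF fin(2)] \<open>B \<noteq> {}\<close> by fastforce
  then obtain a where a: "a \<in> A" "f a + g b \<le> N" using le by blast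
  have "Min (f ` A) \<le> f a" using fin(1) a(1) by simp
  with a b show "Min (f ` A) \<le> N - Max (g ` B)" by linarith
next
  have "A \<noteq> {}" using le \<open>B \<noteq> {}\<close> by blast
  then obtain a where a: "a \<in> A" "f a = Min (f ` A)"
    using Min_in[OF fin(1)] by fastforce
  then obtain b where b: "b \<in> B" "N \<le> f a + g b" using ge by blast
  have "g b \<le> Max (g ` B)" using fin(2) b(1) by simp
  with a b show "N - Max (g ` B) \<le> Min (f ` A)" by linarith
qed

section \<open>Eliminating vertices\<close>

lemma eliminate_seq_Nil [simp]: "eliminate_seq A [] = A"
  unfolding eliminate_seq_def by simp

lemma eliminate_seq_Cons [simp]: "eliminate_seq A (v # \<sigma>) = eliminate_seq (eliminate A v) \<sigma>"
  unfolding eliminate_seq_def by simp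

lemma eliminate_seq_subset_Field:
  "eliminate_seq A \<sigma> \<subseteq> Field A \<times> Field A"
proof (induction \<sigma> arbitrary: A)
  case Nil
  then show ?case by (auto intro: FieldI1 FieldI2)
next
  case (Cons v \<sigma>)
  have "Field (eliminate A v) \<subseteq> Field A"
    unfolding eliminate_def Field_def by auto
  with Cons.IH[of "eliminate A v"] show ?case by auto
qed

lemma finite_eliminate_seq: "finite A \<Longrightarrow> finite (eliminate_seq A \<sigma>)"
  by (rule finite_subset[OF eliminate_seq_subset_Field]) (simp add: finite_Field)

lemma card_eliminate_seq_le:
  assumes "finite A"
  shows "card (eliminate_seq A \<sigma>) \<le> card (Field A) ^ 2"
proof -
  have "card (eliminate_seq A \<sigma>) \<le> card (Field A \<times> Field A)"
    using assms by (intro card_mono eliminate_seq_subset_Field) (simp add: finite_Field)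
  then show ?thesis
    by (simp add: card_cartesian_product power2_eq_square)
qed

lemma arc_in_eliminate_seq:
  "(x, y) \<in> A \<Longrightarrow> x \<notin> set \<sigma> \<Longrightarrow> y \<notin> set \<sigma> \<Longrightarrow> (x, y) \<in> eliminate_seq A \<sigma>"
  by (induction \<sigma> arbitrary: A) (auto simp: eliminate_def)

lemma successively_filter_eliminate:
  assumes "successively (\<lambda>a b. (a, b) \<in> A) ws" "distinct ws" "hd ws \<noteq> v" "last ws \<noteq> v"
  shows "successively (\<lambda>a b. (a, b) \<in> eliminate A v) (filter (\<lambda>x. x \<noteq> v) ws)"
  using assms
proof (induction ws rule: induct_list012)
  case (3 x y zs)
  show ?case
  proof (cases "y = v")
    case False
    with 3 show ?thesis by (auto simp: eliminate_def)
  next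
    case True
    with 3 obtain z zs' where zs: "zs = z # zs'" by (cases zs) auto
    with 3 True show ?thesis by (auto simp: eliminate_def)
  qed
qed simp_all

lemma path_in_eliminate_seq:
  assumes "successively (\<lambda>a b. (a, b) \<in> A) (x # zs @ [y])" "distinct (x # zs @ [y])"
    and "set zs \<subseteq> set \<sigma>" "x \<notin> set \<sigma>" "y \<notin> set \<sigma>"
  shows "(x, y) \<in> eliminate_seq A \<sigma>"
  using assms
proof (induction \<sigma> arbitrary: A zs)
  case Nil
  then show ?case by simp
next
  case (Cons v \<sigma>)
  let ?zs = "filter (\<lambda>x. x \<noteq> v) zs"
  have "filter (\<lambda>x. x \<noteq> v) (x # zs @ [y]) = x # ?zs @ [y]"
    using Cons.prems by auto
  then have "successively (\<lambda>a b. (a, b) \<in> eliminate A v) (x # ?zs @ [y])"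
    using successively_filter_eliminate[of A "x # zs @ [y]" v] Cons.prems by auto
  moreover have "distinct (x # ?zs @ [y])" "set ?zs \<subseteq> set \<sigma>"
    using Cons.prems by auto
  ultimately show ?case
    using Cons.IH[of "eliminate A v" ?zs] Cons.prems by simp
qed

definition eliminate_all :: "('n \<times> 'n) set \<Rightarrow> 'n set \<Rightarrow> ('n \<times> 'n) set" where
  "eliminate_all A S = {(x, y). (x, y) \<in> A \<and> x \<notin> S \<and> y \<notin> S}
                       \<union> {(x, y). \<exists>v\<in>S. (x, v) \<in> A \<and> (v, y) \<in> A}"

lemma eliminate_seq_subset_eliminate_all:
  assumes "\<forall>(x, y) \<in> A. x \<notin> set \<sigma> \<or> y \<notin> set \<sigma>"
  shows "eliminate_seq A \<sigma> \<subseteq> eliminate_all A (set \<sigma>)"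
  using assms
proof (induction \<sigma> arbitrary: A)
  case Nil
  then show ?case by (auto simp: eliminate_all_def)
next
  case (Cons v \<sigma>)
  have "\<forall>(x, y) \<in> eliminate A v. x \<notin> set \<sigma> \<or> y \<notin> set \<sigma>"
    using Cons.prems unfolding eliminate_def by fastforce
  then have "eliminate_seq (eliminate A v) \<sigma> \<subseteq> eliminate_all (eliminate A v) (set \<sigma>)"
    by (rule Cons.IH)
  also have "\<dots> \<subseteq> eliminate_all A (set (v # \<sigma>))"
    using Cons.prems unfolding eliminate_all_def eliminate_def by fastforce
  finally show ?case by simp
qed

locale elimination_reduction =
  fixes vs :: "'v list" and E :: "'v \<Rightarrow> 'v \<Rightarrow> bool" and X :: "'v \<Rightarrow> (nat \<times> nat) set"
  assumes distinct_vs: "distinct vs"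
    and ugraph: "ugraph (set vs) E"
    and deg_2_or_3: "\<forall>v \<in> set vs. deg (set vs) E v = 2 \<or> deg (set vs) E v = 3"
    and no_C3_C4: "no_C3_C4 (set vs) E"
    and gadget: "\<forall>v \<in> set vs. X v \<subseteq> {0..<4} \<times> {0..<4} \<and> card (X v) = gadget_arcs vs E v"
begin

abbreviation "V \<equiv> set vs"
abbreviation "arcs \<equiv> dag_arcs vs E X"

lemma edge_sym: "E x y \<Longrightarrow> E y x"
  and edge_in_V: "E x y \<Longrightarrow> x \<in> V \<and> y \<in> V"
  and edge_irrefl: "\<not> E x x"
  using ugraph unfolding ugraph_def by blast+

lemma no_triangle:
  assumes "E a b" "E b c" "E c a"
  shows False
proof -
  have "a \<in> V" "b \<in> V" "c \<in> V" using assms edge_in_V by blast+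
  with assms no_C3_C4 show False unfolding no_C3_C4_def by blast
qed

lemma no_square:
  assumes "E a b" "E b c" "E c d" "E d a" "distinct [a, b, c, d]"
  shows False
proof -
  have "a \<in> V" "b \<in> V" "c \<in> V" "d \<in> V" using assms edge_in_V by blast+
  with assms no_C3_C4 show False unfolding no_C3_C4_def by blast
qed

lemma before_asym: "before vs x y \<Longrightarrow> \<not> before vs y x"
  using distinct_vs unfolding before_def by (auto simp: nth_eq_iff_index_eq)

lemma before_total:
  assumes "x \<in> V" "y \<in> V" "x \<noteq> y"
  shows "before vs x y \<or> before vs y x"
proof -
  obtain i j where ij: "i < length vs" "vs ! i = x" "j < length vs" "vs ! j = y"
    using assms(1,2) by (auto simp: in_set_conv_nth)
  with assms(3) have "i \<noteq> j" by auto
  then have "i < j \<or> j < i" by arith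
  with ij show ?thesis unfolding before_def by blast
qed

definition in_nbrs :: "'v \<Rightarrow> 'v set" where
  "in_nbrs v = {w \<in> V. E v w \<and> before vs w v}"

definition out_nbrs :: "'v \<Rightarrow> 'v set" where
  "out_nbrs v = {w \<in> V. E v w \<and> before vs v w}"

lemma in_nbrs_iff: "w \<in> in_nbrs v \<longleftrightarrow> E v w \<and> before vs w v"
  and out_nbrs_iff: "w \<in> out_nbrs v \<longleftrightarrow> E v w \<and> before vs v w"
  unfolding in_nbrs_def out_nbrs_def using edge_in_V by blast+

lemma finite_in_nbrs [simp]: "finite (in_nbrs v)"
  and finite_out_nbrs [simp]: "finite (out_nbrs v)"
  unfolding in_nbrs_def out_nbrs_def by simp_all

lemma out_nbrs_iff_in_nbrs: "w \<in> out_nbrs v \<longleftrightarrow> v \<in> in_nbrs w"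
  using edge_sym in_nbrs_iff out_nbrs_iff by blast

lemma not_in_nbrs_self: "v \<notin> in_nbrs v"
  and not_out_nbrs_self: "v \<notin> out_nbrs v"
  using edge_irrefl in_nbrs_iff out_nbrs_iff by blast+

lemma in_nbrs_out_nbrs_disjoint: "in_nbrs v \<inter> out_nbrs v = {}"
  using before_asym in_nbrs_iff out_nbrs_iff by blast

lemma nbrs_eq_in_nbrs_Un_out_nbrs: "v \<in> V \<Longrightarrow> nbrs V E v = in_nbrs v \<union> out_nbrs v"
  unfolding nbrs_def in_nbrs_def out_nbrs_def using before_total edge_irrefl by fastforce

lemma deg_eq_card_in_nbrs_out_nbrs:
  "v \<in> V \<Longrightarrow> deg V E v = card (in_nbrs v) + card (out_nbrs v)"
  unfolding deg_def nbrs_eq_in_nbrs_Un_out_nbrs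
  by (simp add: card_Un_disjoint in_nbrs_out_nbrs_disjoint)

lemma one_sided_iff: "v \<in> V \<Longrightarrow> one_sided vs E v \<longleftrightarrow> in_nbrs v = {} \<or> out_nbrs v = {}"
  unfolding one_sided_def nbrs_eq_in_nbrs_Un_out_nbrs in_nbrs_def out_nbrs_def
  by (auto dest: before_asym)

lemma in_nbrs_out_nbrs_not_shared:
  assumes "v \<noteq> w" "a \<in> in_nbrs v" "a \<in> in_nbrs w" "b \<in> out_nbrs v"
  shows "b \<notin> out_nbrs w"
proof
  assume "b \<in> out_nbrs w"
  with assms have "a \<noteq> b" "a \<noteq> v" "a \<noteq> w" "b \<noteq> v" "b \<noteq> w"
    using before_asym not_in_nbrs_self not_out_nbrs_self by (auto simp: in_nbrs_iff out_nbrs_iff)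
  with assms have "distinct [a, v, b, w]" by auto
  with assms \<open>b \<in> out_nbrs w\<close> show False
    using no_square[of a v b w] edge_sym by (auto simp: in_nbrs_iff out_nbrs_iff)
qed

lemma card_gadget:
  assumes "v \<in> V"
  shows "card (X v) = 5 + 3 * (card (in_nbrs v) + card (out_nbrs v)) + card (in_nbrs v) * card (out_nbrs v)"
proof -
  define p q where "p = card (in_nbrs v)" and "q = card (out_nbrs v)"
  have deg: "deg V E v = p + q"
    using deg_eq_card_in_nbrs_out_nbrs[OF assms] p_def q_def by simp
  have one_sided: "one_sided vs E v \<longleftrightarrow> p = 0 \<or> q = 0"
    using one_sided_iff[OF assms] p_def q_def by simp
  have "p + q = 2 \<or> p + q = 3"
    using deg_2_or_3 assms deg by auto
  then consider "p + q = 2" "p = 0 \<or> q = 0" | "p = 1" "q = 1"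
    | "p + q = 3" "p = 0 \<or> q = 0" | "p = 1" "q = 2" | "p = 2" "q = 1"
    by atomize_elim presburger
  then have "gadget_arcs vs E v = 5 + 3 * (p + q) + p * q"
    by cases (auto simp: gadget_arcs_def vtype_def deg one_sided)
  then show ?thesis
    using gadget assms unfolding p_def q_def by simp
qed

lemma X_subset: "v \<in> V \<Longrightarrow> X v \<subseteq> {..<4} \<times> {..<4}"
  using gadget by (auto simp: atLeast0LessThan)

lemma X_bounds: "(a, b) \<in> X v \<Longrightarrow> v \<in> V \<Longrightarrow> a < 4 \<and> b < 4"
  using X_subset by blast

lemma card_X_le: "v \<in> V \<Longrightarrow> card (X v) \<le> 16"
  using card_mono[OF _ X_subset] by fastforce

lemma card_in_nbrs_mult_card_out_nbrs_le:
  assumes "v \<in> V"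
  shows "card (in_nbrs v) * card (out_nbrs v) \<le> 2"
proof -
  define p q where "p = card (in_nbrs v)" and "q = card (out_nbrs v)"
  have "p + q \<le> 3"
    using deg_2_or_3 assms deg_eq_card_in_nbrs_out_nbrs p_def q_def by fastforce
  then consider "p = 0" | "q = 0" | "p = 1" "q \<le> 2" | "q = 1" "p \<le> 2"
    by atomize_elim arith
  then have "p * q \<le> 2" by cases auto
  then show ?thesis unfolding p_def q_def .
qed

lemma mem_arcs_iff [simp]:
  "(Inn v j, Uv w) \<in> arcs \<longleftrightarrow> w = v \<and> v \<in> V \<and> j < 4"
  "(Inn v j, Tn t) \<in> arcs \<longleftrightarrow> v \<in> V \<and> j < 4 \<and> t < 4"
  "(Inn v a, Outn w b) \<in> arcs \<longleftrightarrow> w = v \<and> v \<in> V \<and> (a, b) \<in> X v"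
  "(Uv v, Outn w j) \<in> arcs \<longleftrightarrow> w = v \<and> v \<in> V \<and> j < 4"
  "(Uv v, Tn t) \<in> arcs \<longleftrightarrow> v \<in> V \<and> t < 4"
  "(Uv v, Uv w) \<in> arcs \<longleftrightarrow> w \<in> out_nbrs v"
  "(Uv v, Inn w j) \<notin> arcs"
  "(x, Inn w j) \<notin> arcs"
  "(Tn t, y) \<notin> arcs"
  "(Outn v j, y) \<notin> arcs"
  unfolding dag_arcs_def by (auto simp: out_nbrs_iff dest: edge_in_V)

lemma arc_to_Uv_iff:
  "(x, Uv v) \<in> arcs \<longleftrightarrow> v \<in> V \<and> ((\<exists>j<4. x = Inn v j) \<or> (\<exists>w\<in>in_nbrs v. x = Uv w))"
  by (cases x) (auto simp: out_nbrs_iff in_nbrs_iff dest: edge_in_V edge_sym)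

lemma arc_from_Uv_iff:
  "(Uv v, y) \<in> arcs \<longleftrightarrow>
     v \<in> V \<and> ((\<exists>j<4. y = Outn v j) \<or> (\<exists>t<4. y = Tn t) \<or> (\<exists>w\<in>out_nbrs v. y = Uv w))"
  by (cases y) (auto simp: out_nbrs_iff dest: edge_in_V)

lemma finite_arcs: "finite arcs"
proof -
  let ?N = "Tn ` {..<4} \<union> Uv ` V \<union> case_prod Inn ` (V \<times> {..<4}) \<union> case_prod Outn ` (V \<times> {..<4})"
  have "arcs \<subseteq> ?N \<times> ?N"
    by (auto simp: dag_arcs_def dest: X_bounds)
  then show ?thesis
    by (rule finite_subset) auto
qed

section \<open>Destroyed and created arcs\<close>

definition isolated :: "'v set \<Rightarrow> 'v set" where
  "isolated U = {v \<in> U. in_nbrs v \<inter> U = {} \<and> out_nbrs v \<inter> U = {}}"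

lemma independent_set_isolated:
  assumes "U \<subseteq> V"
  shows "independent_set V E (isolated U)"
proof -
  have "\<not> E x y" if "x \<in> isolated U" "y \<in> isolated U" for x y
  proof
    assume "E x y"
    then have "y \<in> nbrs V E x" "x \<in> V"
      using edge_in_V by (auto simp: nbrs_def)
    then have "y \<in> in_nbrs x \<union> out_nbrs x"
      using nbrs_eq_in_nbrs_Un_out_nbrs by blast
    with that show False unfolding isolated_def by blast
  qed
  with assms show ?thesis
    unfolding independent_set_def isolated_def by blast
qed

lemma isolated_independent_set: "independent_set V E S \<Longrightarrow> isolated S = S"
  unfolding independent_set_def isolated_def by (auto simp: in_nbrs_iff out_nbrs_iff)

definition lost :: "'v set \<Rightarrow> 'v \<Rightarrow> ('v dnode \<times> 'v dnode) set" where
  "lost U v =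
     (\<lambda>j. (Inn v j, Uv v)) ` {..<4} \<union> (\<lambda>j. (Uv v, Outn v j)) ` {..<4} \<union> (\<lambda>t. (Uv v, Tn t)) ` {..<4}
   \<union> (\<lambda>w. (Uv w, Uv v)) ` in_nbrs v \<union> (\<lambda>w. (Uv v, Uv w)) ` (out_nbrs v - U)"

definition gained :: "'v set \<Rightarrow> 'v \<Rightarrow> ('v dnode \<times> 'v dnode) set" where
  "gained U v =
     (\<lambda>(a, b). (Inn v a, Outn v b)) ` ({..<4} \<times> {..<4} - X v)
   \<union> (\<lambda>(w, a, b). (Inn v a, Outn w b)) ` ((out_nbrs v \<inter> U) \<times> {..<4} \<times> {..<4})
   \<union> (\<lambda>(w, j). (Inn v j, Uv w)) ` ((out_nbrs v - U) \<times> {..<4})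
   \<union> (\<lambda>(w, j). (Uv w, Outn v j)) ` ((in_nbrs v - U) \<times> {..<4})
   \<union> (if v \<in> isolated U then (\<lambda>(a, b). (Uv a, Uv b)) ` (in_nbrs v \<times> out_nbrs v) else {})"

lemma finite_lost: "finite (lost U v)"
  and finite_gained: "finite (gained U v)"
  unfolding lost_def gained_def by auto

lemma card_lost: "card (lost U v) = 12 + card (in_nbrs v) + card (out_nbrs v - U)"
  unfolding lost_def
  by (subst card_Un_disjoint; auto simp: card_image inj_on_def not_in_nbrs_self)+

lemma lost_subset_arcs: "v \<in> V \<Longrightarrow> lost U v \<subseteq> arcs"
  unfolding lost_def by (auto simp: out_nbrs_iff_in_nbrs)

lemma lost_disjoint: "v \<in> U \<Longrightarrow> w \<in> U \<Longrightarrow> v \<noteq> w \<Longrightarrow> lost U v \<inter> lost U w = {}"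
  unfolding lost_def by auto

lemma lost_incident: "(x, y) \<in> lost U v \<Longrightarrow> x = Uv v \<or> y = Uv v"
  unfolding lost_def by auto

lemma card_gained:
  assumes "v \<in> V"
  shows "card (gained U v) =
    (16 - card (X v)) + 16 * card (out_nbrs v \<inter> U) + 4 * card (out_nbrs v - U) + 4 * card (in_nbrs v - U)
    + (if v \<in> isolated U then card (in_nbrs v) * card (out_nbrs v) else 0)"
proof -
  have "card ((\<lambda>(a, b). (Inn v a, Outn v b)) ` ({..<4} \<times> {..<4} - X v)) = 16 - card (X v)"
    using X_subset[OF assms] by (subst card_image) (auto simp: inj_on_def card_Diff_subset finite_subset)
  then show ?thesis
    unfolding gained_def
    by (subst card_Un_disjoint; auto simp: card_image inj_on_def card_cartesian_product not_out_nbrs_self)+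
qed

lemma card_lost_isolated:
  assumes "v \<in> V" "v \<in> isolated U"
  shows "card (lost U v) = card (gained U v) + 1"
proof -
  have "in_nbrs v - U = in_nbrs v" "out_nbrs v - U = out_nbrs v" "out_nbrs v \<inter> U = {}"
    using assms(2) unfolding isolated_def by auto
  then show ?thesis
    using card_lost[of U v] card_gained[OF assms(1), of U] card_gadget[OF assms(1)] card_X_le[OF assms(1)]
      assms(2) by simp
qed

lemma card_lost_not_isolated:
  assumes "v \<in> V" "v \<in> U" "v \<notin> isolated U"
  shows "card (lost U v) + 8 * card (out_nbrs v \<inter> U) \<le> card (gained U v) + 8 * card (in_nbrs v \<inter> U)"
proof -
  have "in_nbrs v \<inter> U \<noteq> {} \<or> out_nbrs v \<inter> U \<noteq> {}"
    using assms(2,3) unfolding isolated_def by blast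
  then have "1 \<le> card (in_nbrs v \<inter> U) + card (out_nbrs v \<inter> U)"
    by (auto simp: Suc_le_eq card_gt_0_iff)
  moreover have "card (in_nbrs v) = card (in_nbrs v \<inter> U) + card (in_nbrs v - U)"
    "card (out_nbrs v) = card (out_nbrs v \<inter> U) + card (out_nbrs v - U)"
    by (simp_all add: card_Int_Diff)
  \<comment> \<open>the slack is 4 |in_nbrs v \<inter> U| + 5 |out_nbrs v \<inter> U| - 1 - |in_nbrs v| |out_nbrs v|\<close>
  ultimately show ?thesis
    using card_lost[of U v] card_gained[OF assms(1), of U] card_gadget[OF assms(1)] card_X_le[OF assms(1)]
      card_in_nbrs_mult_card_out_nbrs_le[OF assms(1)] assms(3) by simp
qed

lemma sum_card_out_nbrs_eq_sum_card_in_nbrs: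
  assumes "finite U"
  shows "(\<Sum>v\<in>U. card (out_nbrs v \<inter> U)) = (\<Sum>v\<in>U. card (in_nbrs v \<inter> U))"
proof -
  have "Sigma U (\<lambda>v. out_nbrs v \<inter> U) = prod.swap ` Sigma U (\<lambda>v. in_nbrs v \<inter> U)"
    using out_nbrs_iff_in_nbrs by force
  then have "card (Sigma U (\<lambda>v. out_nbrs v \<inter> U)) = card (Sigma U (\<lambda>v. in_nbrs v \<inter> U))"
    by (simp add: card_image)
  with assms show ?thesis by simp
qed

lemma sum_card_lost_le:
  assumes "U \<subseteq> V"
  shows "(\<Sum>v\<in>U. card (lost U v)) \<le> (\<Sum>v\<in>U. card (gained U v)) + card (isolated U)"
proof -
  have fin: "finite U" using assms finite_subset by blast
  have "card (lost U v) + 8 * card (out_nbrs v \<inter> U)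
          \<le> card (gained U v) + 8 * card (in_nbrs v \<inter> U) + of_bool (v \<in> isolated U)" if "v \<in> U" for v
  proof (cases "v \<in> isolated U")
    case True
    then have "out_nbrs v \<inter> U = {}" unfolding isolated_def by blast
    with True that assms card_lost_isolated[of v U] show ?thesis by auto
  next
    case False
    with that assms card_lost_not_isolated[of v U] show ?thesis by auto
  qed
  then have "(\<Sum>v\<in>U. card (lost U v) + 8 * card (out_nbrs v \<inter> U))
      \<le> (\<Sum>v\<in>U. card (gained U v) + 8 * card (in_nbrs v \<inter> U) + of_bool (v \<in> isolated U))"
    by (rule sum_mono)
  then have "(\<Sum>v\<in>U. card (lost U v)) + 8 * (\<Sum>v\<in>U. card (out_nbrs v \<inter> U))
      \<le> (\<Sum>v\<in>U. card (gained U v)) + 8 * (\<Sum>v\<in>U. card (in_nbrs v \<inter> U)) + card (U \<inter> isolated U)"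
    using fin by (simp add: sum.distrib sum_distrib_left)
  moreover have "U \<inter> isolated U = isolated U"
    unfolding isolated_def by blast
  ultimately show ?thesis
    using sum_card_out_nbrs_eq_sum_card_in_nbrs[OF fin] by simp
qed

lemma gained_subset_eliminate_seq:
  assumes \<sigma>: "set \<sigma> = Uv ` U" and "U \<subseteq> V" "v \<in> U"
  shows "gained U v \<subseteq> eliminate_seq arcs \<sigma>"
proof
  fix e assume e: "e \<in> gained U v"
  have v: "v \<in> V" "Uv v \<in> set \<sigma>" using assms by auto
  have path: "(x, y) \<in> eliminate_seq arcs \<sigma>"
    if "successively (\<lambda>a b. (a, b) \<in> arcs) (x # zs @ [y])" "distinct (x # zs @ [y])"
       "set zs \<subseteq> Uv ` U" "x \<notin> Uv ` U" "y \<notin> Uv ` U" for x y zs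
    using path_in_eliminate_seq[of arcs x zs y \<sigma>] that \<sigma> by simp
  from e consider
      a b where "a < 4" "b < 4" "e = (Inn v a, Outn v b)"
    | w a b where "w \<in> out_nbrs v" "w \<in> U" "e = (Inn v a, Outn w b)" "a < 4" "b < 4"
    | w j where "w \<in> out_nbrs v" "w \<notin> U" "e = (Inn v j, Uv w)" "j < 4"
    | w j where "w \<in> in_nbrs v" "w \<notin> U" "e = (Uv w, Outn v j)" "j < 4"
    | a b where "a \<in> in_nbrs v" "b \<in> out_nbrs v" "v \<in> isolated U" "e = (Uv a, Uv b)"
    unfolding gained_def by (auto split: if_splits)
  then show "e \<in> eliminate_seq arcs \<sigma>"
  proof cases
    case 1
    show ?thesis unfolding \<open>e = _\<close>
      by (rule path[where zs = "[Uv v]"]) (use 1 v assms in auto)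
  next
    case 2
    show ?thesis unfolding \<open>e = _\<close>
      by (rule path[where zs = "[Uv v, Uv w]"]) (use 2 v assms not_out_nbrs_self in auto)
  next
    case 3
    show ?thesis unfolding \<open>e = _\<close>
      by (rule path[where zs = "[Uv v]"]) (use 3 v assms not_out_nbrs_self in auto)
  next
    case 4
    show ?thesis unfolding \<open>e = _\<close>
      by (rule path[where zs = "[Uv v]"]) (use 4 v assms out_nbrs_iff_in_nbrs in auto)
  next
    case 5
    then have "a \<notin> U" "b \<notin> U" unfolding isolated_def by auto
    moreover have "a \<noteq> b" using 5 in_nbrs_iff out_nbrs_iff before_asym by blast
    ultimately show ?thesis unfolding \<open>e = _\<close>
      by (intro path[where zs = "[Uv v]"]) (use 5 v assms out_nbrs_iff_in_nbrs in auto)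
  qed
qed

lemma gained_disjoint_arcs: "gained U v \<inter> arcs = {}"
proof -
  have "(Uv a, Uv b) \<notin> arcs" if "a \<in> in_nbrs v" "b \<in> out_nbrs v" for a b
    using that no_triangle[of a b v] edge_sym by (auto simp: in_nbrs_iff out_nbrs_iff)
  then show ?thesis
    unfolding gained_def by (auto simp: not_in_nbrs_self not_out_nbrs_self)
qed

lemma gained_disjoint: "v \<noteq> w \<Longrightarrow> gained U v \<inter> gained U w = {}"
  unfolding gained_def by (auto dest: in_nbrs_out_nbrs_not_shared)

lemma arcs_diff_eliminate_seq_subset_lost:
  assumes \<sigma>: "set \<sigma> = Uv ` U"
  shows "arcs - eliminate_seq arcs \<sigma> \<subseteq> (\<Union>v\<in>U. lost U v)"
proof
  fix e assume e: "e \<in> arcs - eliminate_seq arcs \<sigma>"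
  obtain x y where xy: "e = (x, y)" by fastforce
  with e have arc: "(x, y) \<in> arcs" and "(x, y) \<notin> eliminate_seq arcs \<sigma>"
    by auto
  then have "x \<in> Uv ` U \<or> y \<in> Uv ` U"
    using arc_in_eliminate_seq[of x y arcs \<sigma>] \<sigma> by auto
  then consider v where "v \<in> U" "x = Uv v" | v where "v \<in> U" "y = Uv v"
    by blast
  then have "(x, y) \<in> (\<Union>v\<in>U. lost U v)"
  proof cases
    case 1
    with arc consider j where "y = Outn v j" "j < 4" | t where "y = Tn t" "t < 4"
      | w where "y = Uv w" "w \<in> out_nbrs v" "w \<notin> U" | w where "y = Uv w" "v \<in> in_nbrs w" "w \<in> U"
      using arc_from_Uv_iff out_nbrs_iff_in_nbrs by blast
    then show ?thesis
    proof cases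
      case 4
      then have "(x, y) \<in> lost U w" using 1 unfolding lost_def by blast
      with \<open>w \<in> U\<close> show ?thesis by blast
    qed (use 1 in \<open>auto simp: lost_def\<close>)
  next
    case 2
    with arc have "(x, y) \<in> lost U v"
      using arc_to_Uv_iff unfolding lost_def by auto
    with \<open>v \<in> U\<close> show ?thesis by blast
  qed
  then show "e \<in> (\<Union>v\<in>U. lost U v)" using xy by simp
qed

lemma card_arcs_le_card_eliminate_seq:
  assumes \<sigma>: "set \<sigma> = Uv ` U" and "U \<subseteq> V"
  shows "card arcs \<le> card (eliminate_seq arcs \<sigma>) + card (isolated U)"
proof -
  define B where "B = eliminate_seq arcs \<sigma>"
  have fin: "finite U" "finite B"
    using assms finite_subset finite_eliminate_seq[OF finite_arcs] unfolding B_def by blast+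
  have "card arcs = card (arcs \<inter> B) + card (arcs - B)"
    using finite_arcs by (rule card_Int_Diff)
  also have "card (arcs - B) \<le> card (\<Union>v\<in>U. lost U v)"
    using arcs_diff_eliminate_seq_subset_lost[OF \<sigma>] fin(1) finite_lost
    unfolding B_def by (intro card_mono) auto
  also have "\<dots> \<le> (\<Sum>v\<in>U. card (lost U v))"
    using fin(1) by (rule card_UN_le)
  also have "\<dots> \<le> (\<Sum>v\<in>U. card (gained U v)) + card (isolated U)"
    using sum_card_lost_le[OF assms(2)] .
  also have "(\<Sum>v\<in>U. card (gained U v)) = card (\<Union>v\<in>U. gained U v)"
    using gained_disjoint by (simp add: card_UN_disjoint fin finite_gained)
  also have "card (arcs \<inter> B) + (card (\<Union>v\<in>U. gained U v) + card (isolated U))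
      = card ((arcs \<inter> B) \<union> (\<Union>v\<in>U. gained U v)) + card (isolated U)"
    using gained_disjoint_arcs fin finite_gained by (subst card_Un_disjoint) auto
  also have "card ((arcs \<inter> B) \<union> (\<Union>v\<in>U. gained U v)) \<le> card B"
    using gained_subset_eliminate_seq[OF \<sigma> assms(2)] fin(2) unfolding B_def by (intro card_mono) auto
  finally show ?thesis unfolding B_def by simp
qed

lemma bypass_in_gained:
  assumes "v \<in> isolated U" "(x, Uv v) \<in> arcs" "(Uv v, y) \<in> arcs" "(x, y) \<notin> arcs"
  shows "(x, y) \<in> gained U v"
proof -
  have "in_nbrs v \<inter> U = {}" "out_nbrs v \<inter> U = {}"
    using assms(1) unfolding isolated_def by auto
  with assms show ?thesis
    unfolding gained_def arc_to_Uv_iff arc_from_Uv_iff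
    by (auto simp: in_nbrs_iff dest: edge_in_V)
qed

lemma eliminate_seq_independent_subset:
  assumes S: "independent_set V E S" and \<sigma>: "set \<sigma> = Uv ` S"
  shows "eliminate_seq arcs \<sigma> \<subseteq> (arcs - (\<Union>v\<in>S. lost S v)) \<union> (\<Union>v\<in>S. gained S v)"
proof
  have S_isolated: "isolated S = S"
    using S by (rule isolated_independent_set)
  have "\<forall>(x, y) \<in> arcs. x \<notin> set \<sigma> \<or> y \<notin> set \<sigma>"
    using S \<sigma> unfolding independent_set_def by (auto simp: out_nbrs_iff)
  then have sub: "eliminate_seq arcs \<sigma> \<subseteq> eliminate_all arcs (Uv ` S)"
    using eliminate_seq_subset_eliminate_all \<sigma> by metis
  have not_lost: "(x, y) \<notin> (\<Union>v\<in>S. lost S v)" if "x \<notin> Uv ` S" "y \<notin> Uv ` S" for x y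
    using that lost_incident by blast
  fix e assume "e \<in> eliminate_seq arcs \<sigma>"
  moreover obtain x y where e: "e = (x, y)" by fastforce
  ultimately have "(x, y) \<in> eliminate_all arcs (Uv ` S)"
    using sub by blast
  then consider "(x, y) \<in> arcs" "x \<notin> Uv ` S" "y \<notin> Uv ` S"
    | v where "v \<in> S" "(x, Uv v) \<in> arcs" "(Uv v, y) \<in> arcs"
    unfolding eliminate_all_def by blast
  then show "e \<in> (arcs - (\<Union>v\<in>S. lost S v)) \<union> (\<Union>v\<in>S. gained S v)"
  proof cases
    case 1
    with e not_lost show ?thesis by blast
  next
    case 2
    then have v: "v \<in> isolated S"
      using S_isolated by simp
    show ?thesis
    proof (cases "(x, y) \<in> arcs")
      case True
      have "x \<notin> Uv ` S" "y \<notin> Uv ` S"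
        using 2 v arc_to_Uv_iff arc_from_Uv_iff unfolding isolated_def by auto
      with True e not_lost show ?thesis by blast
    next
      case False
      with 2 v have "(x, y) \<in> gained S v"
        by (intro bypass_in_gained)
      with 2 e show ?thesis by blast
    qed
  qed
qed

lemma card_eliminate_seq_independent_le:
  assumes S: "independent_set V E S" and \<sigma>: "set \<sigma> = Uv ` S"
  shows "card (eliminate_seq arcs \<sigma>) + card S \<le> card arcs"
proof -
  have SV: "S \<subseteq> V" and fin: "finite S"
    using S finite_subset unfolding independent_set_def by auto
  let ?L = "\<Union>v\<in>S. lost S v"
  have L_sub: "?L \<subseteq> arcs"
    using SV lost_subset_arcs by blast
  have card_L: "card ?L = (\<Sum>v\<in>S. card (lost S v))"
    using fin lost_disjoint finite_lost by (subst card_UN_disjoint) auto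
  have "(\<Sum>v\<in>S. card (lost S v)) = (\<Sum>v\<in>S. card (gained S v) + 1)"
    using SV isolated_independent_set[OF S] card_lost_isolated by (intro sum.cong) auto
  then have sum_eq: "(\<Sum>v\<in>S. card (lost S v)) = (\<Sum>v\<in>S. card (gained S v)) + card S"
    by (simp only: sum.distrib card_eq_sum)
  have "card (eliminate_seq arcs \<sigma>) \<le> card ((arcs - ?L) \<union> (\<Union>v\<in>S. gained S v))"
    using eliminate_seq_independent_subset[OF S \<sigma>] fin finite_arcs finite_gained
    by (intro card_mono) auto
  also have "\<dots> \<le> card (arcs - ?L) + card (\<Union>v\<in>S. gained S v)"
    by (rule card_Un_le)
  also have "\<dots> \<le> card (arcs - ?L) + (\<Sum>v\<in>S. card (gained S v))"
    using card_UN_le[OF fin] by simp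
  also have "card (arcs - ?L) = card arcs - card ?L"
    using L_sub finite_arcs by (simp add: card_Diff_subset finite_subset)
  finally show ?thesis
    using card_L sum_eq card_mono[OF finite_arcs L_sub] by linarith
qed

lemma elimination_sequenceE:
  assumes "elimination_sequence (internal vs) \<sigma>"
  obtains U where "U \<subseteq> V" "set \<sigma> = Uv ` U"
proof
  show "{v \<in> V. Uv v \<in> set \<sigma>} \<subseteq> V" by blast
  show "set \<sigma> = Uv ` {v \<in> V. Uv v \<in> set \<sigma>}"
    using assms unfolding elimination_sequence_def internal_def by auto
qed

lemma elimination_sequence_exists:
  assumes "U \<subseteq> V"
  obtains \<sigma> where "elimination_sequence (internal vs) \<sigma>" "set \<sigma> = Uv ` U"
proof -
  obtain xs where "set xs = U" "distinct xs"
    using finite_distinct_list[OF finite_subset[OF assms finite_set]] by blast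
  with assms have "elimination_sequence (internal vs) (map Uv xs)" "set (map Uv xs) = Uv ` U"
    unfolding elimination_sequence_def internal_def by (auto simp: distinct_map inj_on_def)
  then show ?thesis by (rule that)
qed

lemma independent_set_from_elimination_sequence:
  assumes "elimination_sequence (internal vs) \<sigma>"
  shows "\<exists>S. independent_set V E S \<and> card arcs \<le> card (eliminate_seq arcs \<sigma>) + card S"
proof -
  obtain U where "U \<subseteq> V" "set \<sigma> = Uv ` U"
    using assms by (rule elimination_sequenceE)
  then show ?thesis
    using independent_set_isolated[of U] card_arcs_le_card_eliminate_seq[of \<sigma> U] by blast
qed

lemma elimination_sequence_from_independent_set:
  assumes "independent_set V E S"
  shows "\<exists>\<sigma>. elimination_sequence (internal vs) \<sigma> \<and> card (eliminate_seq arcs \<sigma>) + card S \<le> card arcs"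
proof -
  have "S \<subseteq> V"
    using assms unfolding independent_set_def by blast
  then obtain \<sigma> where "elimination_sequence (internal vs) \<sigma>" "set \<sigma> = Uv ` S"
    by (rule elimination_sequence_exists)
  then show ?thesis
    using card_eliminate_seq_independent_le[OF assms] by blast
qed

lemma independent_set_card_ge_iff:
  "(\<exists>S. independent_set V E S \<and> card S \<ge> k) \<longleftrightarrow>
     (\<exists>\<sigma>. elimination_sequence (internal vs) \<sigma> \<and>
        int (card (eliminate_seq arcs \<sigma>)) \<le> int (card arcs) - int k)"
proof
  assume "\<exists>S. independent_set V E S \<and> card S \<ge> k"
  with elimination_sequence_from_independent_set
  show "\<exists>\<sigma>. elimination_sequence (internal vs) \<sigma> \<and>
          int (card (eliminate_seq arcs \<sigma>)) \<le> int (card arcs) - int k"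
    by (fastforce simp: algebra_simps)
next
  assume "\<exists>\<sigma>. elimination_sequence (internal vs) \<sigma> \<and>
            int (card (eliminate_seq arcs \<sigma>)) \<le> int (card arcs) - int k"
  with independent_set_from_elimination_sequence
  show "\<exists>S. independent_set V E S \<and> card S \<ge> k"
    by (fastforce simp: algebra_simps)
qed

lemma Min_card_eliminate_seq:
  "Min {card (eliminate_seq arcs \<sigma>) | \<sigma>. elimination_sequence (internal vs) \<sigma>}
     = card arcs - independence_number V E"
  unfolding independence_number_def setcompr_eq_image
proof (rule Min_eq_diff_Max)
  show "finite ((\<lambda>\<sigma>. card (eliminate_seq arcs \<sigma>)) ` {\<sigma>. elimination_sequence (internal vs) \<sigma>})"
    by (rule finite_subset[of _ "{..card (Field arcs) ^ 2}"])
      (auto simp: card_eliminate_seq_le finite_arcs)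
  show "finite (card ` {S. independent_set V E S})"
    by (rule finite_subset[of _ "{..card V}"]) (auto simp: independent_set_def card_mono)
  show "{S. independent_set V E S} \<noteq> {}"
    using independent_set_def by auto
qed (use independent_set_from_elimination_sequence elimination_sequence_from_independent_set in auto)

end

theorem mainTheorem6:
  fixes vs :: "'v list" and E :: "'v \<Rightarrow> 'v \<Rightarrow> bool" and X :: "'v \<Rightarrow> (nat \<times> nat) set"
  assumes "distinct vs"
    and "ugraph (set vs) E"
    and "\<forall>v \<in> set vs. deg (set vs) E v = 2 \<or> deg (set vs) E v = 3"
    and "no_C3_C4 (set vs) E"
    and "\<forall>v \<in> set vs. X v \<subseteq> {0..<4} \<times> {0..<4} \<and> card (X v) = gadget_arcs vs E v"
  shows "(\<forall>k::nat. (\<exists>S. independent_set (set vs) E S \<and> card S \<ge> k) \<longleftrightarrow>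
            (\<exists>\<sigma>. elimination_sequence (internal vs) \<sigma> \<and>
                 int (card (eliminate_seq (dag_arcs vs E X) \<sigma>)) \<le> int (card (dag_arcs vs E X)) - int k))
       \<and> Min {card (eliminate_seq (dag_arcs vs E X) \<sigma>) | \<sigma>. elimination_sequence (internal vs) \<sigma>}
           = card (dag_arcs vs E X) - independence_number (set vs) E"
proof -
  interpret elimination_reduction vs E X
    using assms by unfold_locales
  show ?thesis
    using independent_set_card_ge_iff Min_card_eliminate_seq by blast
qed

end
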